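(* Let $\rho$ be a representation of $D^{2,2,2}$ and let $\{i,j,k\}=\{1,2,3\}$. 1. Suppose $a,b\in D^{2,2,2}$ satisfy one of the following: (i) $x_i+x_jx_k\subseteq a$; (ii) $x_i+x_jx_k\subseteq b$; (iii) $x_i\subseteq a$ and $x_jx_k\subseteq b$; (iv) $x_i\subseteq b$ and $x_jx_k\subseteq a$. Then $\psi_i(ab)=\psi_i(a)\cap\psi_i(b)$ (and $\psi_i(a+b)=\psi_i(a)+\psi_i(b)$). 2. For every $n\ge 0$ and every $b\in D^{2,2,2}$: $$\psi_i(ba^{ij}_n)=\psi_i(b)\cap\psi_i(a^{ij}_n),\qquad \psi_j(ba^{ij}_n)=\psi_j(b)\cap\psi_j(a^{ij}_n),\qquad \psi_i(bA^{ij}_n)=\psi_i(b)\cap\psi_i(A^{ij}_n).$$ 3. For every $b\in D^{2,2,2}$, $\psi_i(b+x_i)=\psi_i(b)$.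
   Context: $D^{2,2,2}$ is the modular lattice generated by $x_1,y_1,x_2,y_2,x_3,y_3$ subject only to $x_i\subseteq y_i$ ($i=1,2,3$), with a greatest element $I$ adjoined. Meet is written $ab$, join $a+b$. Atomic elements: for distinct $i,j$, let $k$ denote the third index. Define - $a^{ij}_0=I$ and $a^{ij}_n=x_i+y_ja^{jk}_{n-1}$ for $n\ge1$; - $A^{ij}_0=I$ and $A^{ij}_n=y_i+x_jA^{ki}_{n-1}$ for $n\ge1$. A representation $\rho$ of $D^{2,2,2}$ in a finite-dimensional vector space $X_0$ is a lattice morphism from $D^{2,2,2}$ to the subspace lattice of $X_0$, with $\rho(I)=X_0$. Write $X_i=\rho(x_i)\subseteq Y_i=\rho(y_i)$. Put $R=Y_1\oplus Y_2\oplus Y_3$ and $X^1_0=\{(\eta_1,\eta_2,\eta_3)\in R:\sum\eta_i=0\}$. Define subspaces of $R$: - $G_i$: triples with $i$-th coordinate in $Y_i$ and the others $0$; - $G'_i$: triples with $i$-th coordinate in $X_i$; - $H'_i$: triples with $i$-th coordinate $0$. $\Phi^+\rho$ is the representation in $X^1_0$ with $\Phi^+\rho(y_i)=G'_i\cap X^1_0$, $\Phi^+\rho(x_i)=H'_i\cap X^1_0$, $\Phi^+\rho(I)=X^1_0$. Set $\nu^1(a)=\Phi^+\rho(a)\subseteq R$. The joint map is $\psi_i(a)=X^1_0+G_i\cap(H'_i+\nu^1(a))$. *)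

theory Defs
  imports Complex_Main "HOL-Library.Function_Algebras"
begin

datatype ix = i1 | i2 | i3

fun third :: "ix \<Rightarrow> ix \<Rightarrow> ix" where
  "third i1 i2 = i3" | "third i2 i1 = i3"
| "third i1 i3 = i2" | "third i3 i1 = i2"
| "third i2 i3 = i1" | "third i3 i2 = i1"
| "third i j = i"

text \<open>Lattice terms over the generators x_i, y_i and the adjoined top I.
  Meet is written ab in the paper, join a+b.\<close>
datatype lterm = Xg ix | Yg ix | Top | Meet lterm lterm | Join lterm lterm

text \<open>Its quotient is the free modular lattice with top
  generated by x_i \<le> y_i.\<close>
inductive leD :: "lterm \<Rightarrow> lterm \<Rightarrow> bool" where
  leD_refl: "leD a a"
| leD_trans: "leD a b \<Longrightarrow> leD b c \<Longrightarrow> leD a c"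
| leD_meet1: "leD (Meet a b) a"
| leD_meet2: "leD (Meet a b) b"
| leD_meet_glb: "leD c a \<Longrightarrow> leD c b \<Longrightarrow> leD c (Meet a b)"
| leD_join1: "leD a (Join a b)"
| leD_join2: "leD b (Join a b)"
| leD_join_lub: "leD a c \<Longrightarrow> leD b c \<Longrightarrow> leD (Join a b) c"
| leD_top: "leD a Top"
| leD_gen: "leD (Xg i) (Yg i)"
| leD_modular: "leD a c \<Longrightarrow> leD (Meet (Join a b) c) (Join a (Meet b c))"

fun a_el :: "ix \<Rightarrow> ix \<Rightarrow> nat \<Rightarrow> lterm" where
  "a_el i j 0 = Top"
| "a_el i j (Suc n) = Join (Xg i) (Meet (Yg j) (a_el j (third i j) n))"

fun A_el :: "ix \<Rightarrow> ix \<Rightarrow> nat \<Rightarrow> lterm" where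
  "A_el i j 0 = Top"
| "A_el i j (Suc n) = Join (Yg i) (Meet (Xg j) (A_el (third i j) i n))"

definition ssum :: "'a::plus set \<Rightarrow> 'a set \<Rightarrow> 'a set" where
  "ssum A B = {a + b | a b. a \<in> A \<and> b \<in> B}"

text \<open>A representation (lattice morphism from the free lattice) is determined by
  the images of the generators and of I: it is term evaluation.\<close>
fun eval :: "'a::plus set \<Rightarrow> (ix \<Rightarrow> 'a set) \<Rightarrow> (ix \<Rightarrow> 'a set) \<Rightarrow> lterm \<Rightarrow> 'a set" where
  "eval T X Y (Xg i) = X i"
| "eval T X Y (Yg i) = Y i"
| "eval T X Y Top = T"
| "eval T X Y (Meet a b) = eval T X Y a \<inter> eval T X Y b"
| "eval T X Y (Join a b) = ssum (eval T X Y a) (eval T X Y b)"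

text \<open>Triples (eta_1, eta_2, eta_3) are functions ix \<Rightarrow> 'v.\<close>
definition Rsp :: "(ix \<Rightarrow> 'v::ab_group_add set) \<Rightarrow> (ix \<Rightarrow> 'v) set" where
  "Rsp Y = {\<eta>. \<forall>t. \<eta> t \<in> Y t}"

definition X10 :: "(ix \<Rightarrow> 'v::ab_group_add set) \<Rightarrow> (ix \<Rightarrow> 'v) set" where
  "X10 Y = {\<eta> \<in> Rsp Y. \<eta> i1 + \<eta> i2 + \<eta> i3 = 0}"

definition Gsp :: "(ix \<Rightarrow> 'v::ab_group_add set) \<Rightarrow> ix \<Rightarrow> (ix \<Rightarrow> 'v) set" where
  "Gsp Y i = {\<eta>. \<eta> i \<in> Y i \<and> (\<forall>t. t \<noteq> i \<longrightarrow> \<eta> t = 0)}"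

definition G'sp :: "(ix \<Rightarrow> 'v::ab_group_add set) \<Rightarrow> (ix \<Rightarrow> 'v set) \<Rightarrow> ix \<Rightarrow> (ix \<Rightarrow> 'v) set" where
  "G'sp X Y i = {\<eta> \<in> Rsp Y. \<eta> i \<in> X i}"

definition H'sp :: "(ix \<Rightarrow> 'v::ab_group_add set) \<Rightarrow> ix \<Rightarrow> (ix \<Rightarrow> 'v) set" where
  "H'sp Y i = {\<eta> \<in> Rsp Y. \<eta> i = 0}"

definition nu1 :: "(ix \<Rightarrow> 'v::ab_group_add set) \<Rightarrow> (ix \<Rightarrow> 'v set) \<Rightarrow> lterm \<Rightarrow> (ix \<Rightarrow> 'v) set" where
  "nu1 X Y a = eval (X10 Y) (\<lambda>i. H'sp Y i \<inter> X10 Y) (\<lambda>i. G'sp X Y i \<inter> X10 Y) a"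

definition psi :: "(ix \<Rightarrow> 'v::ab_group_add set) \<Rightarrow> (ix \<Rightarrow> 'v set) \<Rightarrow> ix \<Rightarrow> lterm \<Rightarrow> (ix \<Rightarrow> 'v) set" where
  "psi X Y i a = ssum (X10 Y) (Gsp Y i \<inter> ssum (H'sp Y i) (nu1 X Y a))"

end

theory Submission
  imports Defs
begin

text \<open>Write \<sigma> for the coordinate sum on R and \<pi>_i for the i-th projection. Unfolding the
  definition, \<psi>_i(a) consists of the \<eta> \<in> R with \<sigma> \<eta> \<in> \<pi>_i(\<nu>^1(a)). Both maps are additive,
  so \<psi>_i preserves joins. The kernel of \<pi>_i on X^1_0 is exactly \<nu>^1(x_i); hence \<pi>_i
  commutes with meets as soon as one of the two elements lies above x_i, and joining x_i
  does not change \<pi>_i(\<nu>^1(b)). The atomic elements a^ij_n, A^ij_n all lie above x_i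
  (and a^ij_n above x_j).\<close>

definition add_subgroup :: "'a::ab_group_add set \<Rightarrow> bool" where
  "add_subgroup S \<longleftrightarrow> 0 \<in> S \<and> (\<forall>x\<in>S. \<forall>y\<in>S. x - y \<in> S)"

lemma add_subgroup_0: "add_subgroup S \<Longrightarrow> 0 \<in> S"
  by (simp add: add_subgroup_def)

lemma add_subgroup_diff: "add_subgroup S \<Longrightarrow> x \<in> S \<Longrightarrow> y \<in> S \<Longrightarrow> x - y \<in> S"
  by (simp add: add_subgroup_def)

lemma add_subgroup_add:
  assumes "add_subgroup S" "x \<in> S" "y \<in> S"
  shows "x + y \<in> S"
  using add_subgroup_diff[OF assms(1,2) add_subgroup_diff[OF assms(1) add_subgroup_0[OF assms(1)] assms(3)]]
  by simp

lemma add_subgroup_Int: "add_subgroup A \<Longrightarrow> add_subgroup B \<Longrightarrow> add_subgroup (A \<inter> B)"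
  by (simp add: add_subgroup_def)

lemma ssumI: "a \<in> A \<Longrightarrow> b \<in> B \<Longrightarrow> x = a + b \<Longrightarrow> x \<in> ssum A B"
  unfolding ssum_def by blast

lemma ssumE:
  assumes "x \<in> ssum A B"
  obtains a b where "x = a + b" "a \<in> A" "b \<in> B"
  using assms unfolding ssum_def by blast

lemma add_subgroup_ssum:
  assumes "add_subgroup A" "add_subgroup B"
  shows "add_subgroup (ssum A B)"
  unfolding add_subgroup_def
proof (intro conjI ballI)
  show "0 \<in> ssum A B"
    using assms by (intro ssumI[of 0 A 0 B]) (simp_all add: add_subgroup_0)
  fix x y assume "x \<in> ssum A B" "y \<in> ssum A B"
  obtain a b where "x = a + b" "a \<in> A" "b \<in> B"
    using \<open>x \<in> ssum A B\<close> by (rule ssumE)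
  moreover obtain a' b' where "y = a' + b'" "a' \<in> A" "b' \<in> B"
    using \<open>y \<in> ssum A B\<close> by (rule ssumE)
  ultimately show "x - y \<in> ssum A B"
    using assms by (intro ssumI[of "a - a'" A "b - b'" B]) (simp_all add: add_subgroup_diff)
qed

lemma ssum_upper1:
  fixes A B :: "'a::monoid_add set"
  assumes "0 \<in> B"
  shows "A \<subseteq> ssum A B"
proof
  fix a assume "a \<in> A"
  then show "a \<in> ssum A B"
    using assms by (intro ssumI[of a A 0 B]) simp_all
qed

lemma ssum_upper2:
  fixes A B :: "'a::monoid_add set"
  assumes "0 \<in> A"
  shows "B \<subseteq> ssum A B"
proof
  fix b assume "b \<in> B"
  then show "b \<in> ssum A B"
    using assms by (intro ssumI[of 0 A b B]) simp_all
qed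

lemma ssum_zero_right: "ssum A {0} = (A :: 'a::monoid_add set)"
  by (auto simp: ssum_def)

lemma ssum_least:
  assumes "add_subgroup C" "A \<subseteq> C" "B \<subseteq> C"
  shows "ssum A B \<subseteq> C"
proof
  fix x assume "x \<in> ssum A B"
  then obtain a b where "x = a + b" "a \<in> A" "b \<in> B"
    by (rule ssumE)
  then show "x \<in> C"
    using assms add_subgroup_add by blast
qed

lemma ssum_Int_modular:
  assumes "add_subgroup C" "A \<subseteq> C"
  shows "ssum A B \<inter> C \<subseteq> ssum A (B \<inter> C)"
proof
  fix x assume x: "x \<in> ssum A B \<inter> C"
  then obtain a b where ab: "x = a + b" "a \<in> A" "b \<in> B"
    by (blast elim: ssumE)
  have "x - a \<in> C"
    using x ab(2) assms by (blast intro: add_subgroup_diff)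
  then have "b \<in> C"
    using ab(1) by (simp add: algebra_simps)
  with ab show "x \<in> ssum A (B \<inter> C)"
    by (blast intro: ssumI)
qed

locale subgroup_representation =
  fixes T :: "'v::ab_group_add set" and X Y :: "ix \<Rightarrow> 'v set"
  assumes add_subgroup_T: "add_subgroup T"
    and add_subgroup_X: "add_subgroup (X i)"
    and add_subgroup_Y: "add_subgroup (Y i)"
    and X_le_Y: "X i \<subseteq> Y i"
    and Y_le_T: "Y i \<subseteq> T"
begin

lemma add_subgroup_eval: "add_subgroup (eval T X Y a)"
  by (induction a)
    (simp_all add: add_subgroup_Int add_subgroup_ssum add_subgroup_T add_subgroup_X add_subgroup_Y)

lemma eval_le_T: "eval T X Y a \<subseteq> T"
proof (induction a)
  case (Xg i)
  show ?case using X_le_Y[of i] Y_le_T[of i] by simp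
next
  case (Join a b)
  then show ?case by (simp add: ssum_least add_subgroup_T)
qed (use Y_le_T in auto)

lemma eval_mono: "leD a b \<Longrightarrow> eval T X Y a \<subseteq> eval T X Y b"
proof (induction rule: leD.induct)
  case (leD_join1 a b)
  show ?case by (simp add: ssum_upper1 add_subgroup_0 add_subgroup_eval)
next
  case (leD_join2 b a)
  show ?case by (simp add: ssum_upper2 add_subgroup_0 add_subgroup_eval)
next
  case (leD_join_lub a c b)
  then show ?case by (simp add: ssum_least add_subgroup_eval)
next
  case (leD_modular a c b)
  then show ?case by (simp add: ssum_Int_modular add_subgroup_eval)
qed (use eval_le_T X_le_Y in auto)

end

lemma (in additive) image_ssum: "f ` ssum A B = ssum (f ` A) (f ` B)"
proof (intro equalityI subsetI)
  fix y assume "y \<in> f ` ssum A B"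
  then obtain a b where "y = f (a + b)" "a \<in> A" "b \<in> B"
    by (blast elim: ssumE)
  then show "y \<in> ssum (f ` A) (f ` B)"
    by (intro ssumI[of "f a" _ "f b"]) (simp_all add: add)
next
  fix y assume "y \<in> ssum (f ` A) (f ` B)"
  then obtain a b where "y = f (a + b)" "a \<in> A" "b \<in> B"
    by (auto simp: add elim!: ssumE)
  then show "y \<in> f ` ssum A B"
    by (blast intro: ssumI)
qed

lemma (in additive) image_ssum_kernel:
  assumes "0 \<in> K" "\<And>k. k \<in> K \<Longrightarrow> f k = 0"
  shows "f ` ssum A K = f ` A"
proof -
  have "f ` K = {0}"
    using assms zero by force
  then show ?thesis
    by (simp add: image_ssum ssum_zero_right)
qed

lemma (in additive) image_Int_eq:
  assumes C: "add_subgroup C" and A: "add_subgroup A" "A \<subseteq> C"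
    and B: "B \<subseteq> C" and kernel: "{c \<in> C. f c = 0} \<subseteq> A"
  shows "f ` (A \<inter> B) = f ` A \<inter> f ` B"
proof (intro equalityI subsetI)
  fix y assume "y \<in> f ` A \<inter> f ` B"
  then obtain a b where ab: "a \<in> A" "b \<in> B" "y = f a" "f a = f b"
    by auto
  have "a - b \<in> C"
    using add_subgroup_diff[OF C] ab(1,2) A(2) B by blast
  moreover have "f (a - b) = 0"
    using ab(4) by (simp add: diff)
  ultimately have "a - b \<in> A"
    using kernel by blast
  then have "a - (a - b) \<in> A"
    using add_subgroup_diff[OF A(1) ab(1)] by blast
  with ab show "y \<in> f ` (A \<inter> B)"
    by auto
qed auto

definition coord_sum :: "(ix \<Rightarrow> 'v::ab_group_add) \<Rightarrow> 'v" where
  "coord_sum \<eta> = \<eta> i1 + \<eta> i2 + \<eta> i3"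

interpretation coord_sum: additive coord_sum
  by unfold_locales (simp add: coord_sum_def algebra_simps)

lemma additive_proj: "additive (\<lambda>\<zeta>::ix \<Rightarrow> 'v::ab_group_add. \<zeta> i)"
  by unfold_locales simp

lemma coord_sum_single: "coord_sum (0(i := s)) = s"
  by (cases i) (simp_all add: coord_sum_def)

lemma Rsp_single: "(\<And>t. add_subgroup (Y t)) \<Longrightarrow> s \<in> Y i \<Longrightarrow> 0(i := s) \<in> Rsp Y"
  by (simp add: Rsp_def add_subgroup_0)

lemma X10_eq: "X10 Y = {\<eta> \<in> Rsp Y. coord_sum \<eta> = 0}"
  by (simp add: X10_def coord_sum_def)

lemma add_subgroup_Rsp: "(\<And>t. add_subgroup (Y t)) \<Longrightarrow> add_subgroup (Rsp Y)"
  by (simp add: add_subgroup_def Rsp_def)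

lemma add_subgroup_X10:
  assumes "\<And>t. add_subgroup (Y t)"
  shows "add_subgroup (X10 Y)"
  using add_subgroup_0[OF add_subgroup_Rsp[OF assms]] add_subgroup_diff[OF add_subgroup_Rsp[OF assms]]
  by (simp add: add_subgroup_def X10_eq coord_sum.zero coord_sum.diff)

lemma add_subgroup_H'sp: "(\<And>t. add_subgroup (Y t)) \<Longrightarrow> add_subgroup (H'sp Y i)"
  by (simp add: add_subgroup_def H'sp_def Rsp_def)

lemma add_subgroup_G'sp:
  "(\<And>t. add_subgroup (X t)) \<Longrightarrow> (\<And>t. add_subgroup (Y t)) \<Longrightarrow> add_subgroup (G'sp X Y i)"
  by (simp add: add_subgroup_def G'sp_def Rsp_def)

lemma subgroup_representation_Phi:
  assumes "\<And>t. add_subgroup (X t)" "\<And>t. add_subgroup (Y t)"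
  shows "subgroup_representation (X10 Y) (\<lambda>i. H'sp Y i \<inter> X10 Y) (\<lambda>i. G'sp X Y i \<inter> X10 Y)"
  using assms
proof unfold_locales
  fix i
  show "add_subgroup (H'sp Y i \<inter> X10 Y)" "add_subgroup (G'sp X Y i \<inter> X10 Y)"
    using assms by (simp_all add: add_subgroup_Int add_subgroup_X10 add_subgroup_H'sp add_subgroup_G'sp)
  show "H'sp Y i \<inter> X10 Y \<subseteq> G'sp X Y i \<inter> X10 Y"
    using assms by (auto simp: H'sp_def G'sp_def add_subgroup_0)
qed (simp_all add: assms add_subgroup_X10)

lemma nu1_Xg: "nu1 X Y (Xg i) = H'sp Y i \<inter> X10 Y"
  by (simp add: nu1_def)

lemma nu1_Meet: "nu1 X Y (Meet a b) = nu1 X Y a \<inter> nu1 X Y b"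
  by (simp add: nu1_def)

lemma nu1_Join: "nu1 X Y (Join a b) = ssum (nu1 X Y a) (nu1 X Y b)"
  by (simp add: nu1_def)

lemma ssum_X10_Gsp_eq:
  assumes Y: "\<And>t. add_subgroup (Y t)" and N: "N \<subseteq> Rsp Y"
  shows "ssum (X10 Y) (Gsp Y i \<inter> ssum (H'sp Y i) N)
           = {\<eta> \<in> Rsp Y. coord_sum \<eta> \<in> (\<lambda>\<zeta>. \<zeta> i) ` N}"
proof (intro equalityI subsetI)
  fix \<eta> assume "\<eta> \<in> ssum (X10 Y) (Gsp Y i \<inter> ssum (H'sp Y i) N)"
  then obtain \<xi> g where \<eta>: "\<eta> = \<xi> + g" "\<xi> \<in> X10 Y" "g \<in> Gsp Y i \<inter> ssum (H'sp Y i) N"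
    by (rule ssumE)
  then obtain h \<zeta> where g: "g = h + \<zeta>" "h \<in> H'sp Y i" "\<zeta> \<in> N"
    by (blast elim: ssumE)
  have g_single: "g = 0(i := \<zeta> i)"
  proof
    fix t show "g t = (0(i := \<zeta> i)) t"
      using \<eta>(3) g(1,2) by (cases "t = i") (auto simp: Gsp_def H'sp_def)
  qed
  have "g \<in> Rsp Y"
    unfolding g_single using g(3) N Y by (intro Rsp_single) (auto simp: Rsp_def)
  then have "\<eta> \<in> Rsp Y"
    using \<eta>(1,2) add_subgroup_add[OF add_subgroup_Rsp[OF Y]] by (simp add: X10_eq)
  moreover have "coord_sum \<eta> = \<zeta> i"
    using \<eta>(1,2) g_single by (simp add: coord_sum.add X10_eq coord_sum_single)
  ultimately show "\<eta> \<in> {\<eta> \<in> Rsp Y. coord_sum \<eta> \<in> (\<lambda>\<zeta>. \<zeta> i) ` N}"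
    using g(3) by blast
next
  fix \<eta> assume "\<eta> \<in> {\<eta> \<in> Rsp Y. coord_sum \<eta> \<in> (\<lambda>\<zeta>. \<zeta> i) ` N}"
  then obtain \<zeta> where \<eta>: "\<eta> \<in> Rsp Y" "\<zeta> \<in> N" "coord_sum \<eta> = \<zeta> i"
    by auto
  define g where "g = 0(i := \<zeta> i)"
  have \<zeta>: "\<zeta> \<in> Rsp Y"
    using \<eta>(2) N by blast
  then have "\<zeta> i \<in> Y i"
    by (simp add: Rsp_def)
  then have g: "g \<in> Rsp Y"
    unfolding g_def by (rule Rsp_single[OF Y])
  have "g - \<zeta> \<in> H'sp Y i"
    using add_subgroup_diff[OF add_subgroup_Rsp[OF Y] g \<zeta>] by (simp add: H'sp_def g_def)
  then have "g \<in> ssum (H'sp Y i) N"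
    using \<eta>(2) by (intro ssumI) auto
  moreover have "g \<in> Gsp Y i"
    using \<open>\<zeta> i \<in> Y i\<close> by (simp add: Gsp_def g_def)
  moreover have "\<eta> - g \<in> X10 Y"
    using \<eta> add_subgroup_diff[OF add_subgroup_Rsp[OF Y] \<eta>(1) g]
    by (simp add: X10_eq coord_sum.diff g_def coord_sum_single)
  ultimately show "\<eta> \<in> ssum (X10 Y) (Gsp Y i \<inter> ssum (H'sp Y i) N)"
    by (intro ssumI[of "\<eta> - g" _ g]) auto
qed

lemma Rsp_coord_sum_vimage_ssum:
  assumes Y: "\<And>t. add_subgroup (Y t)" and T: "T \<subseteq> Y i"
  shows "{\<eta> \<in> Rsp Y. coord_sum \<eta> \<in> ssum S T}
           = ssum {\<eta> \<in> Rsp Y. coord_sum \<eta> \<in> S} {\<eta> \<in> Rsp Y. coord_sum \<eta> \<in> T}"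
proof (intro equalityI subsetI)
  fix \<eta> assume "\<eta> \<in> {\<eta> \<in> Rsp Y. coord_sum \<eta> \<in> ssum S T}"
  then obtain s t where \<eta>: "\<eta> \<in> Rsp Y" "coord_sum \<eta> = s + t" "s \<in> S" "t \<in> T"
    by (blast elim: ssumE)
  define \<eta>2 where "\<eta>2 = 0(i := t)"
  have \<eta>2: "\<eta>2 \<in> Rsp Y" "coord_sum \<eta>2 = t"
    using Y \<eta>(4) T by (auto simp: \<eta>2_def coord_sum_single intro: Rsp_single)
  have "\<eta> - \<eta>2 \<in> Rsp Y" "coord_sum (\<eta> - \<eta>2) = s"
    using add_subgroup_diff[OF add_subgroup_Rsp[OF Y] \<eta>(1) \<eta>2(1)] \<eta>(2) \<eta>2(2)
    by (simp_all add: coord_sum.diff)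
  with \<eta> \<eta>2 show "\<eta> \<in> ssum {\<eta> \<in> Rsp Y. coord_sum \<eta> \<in> S} {\<eta> \<in> Rsp Y. coord_sum \<eta> \<in> T}"
    by (intro ssumI[of "\<eta> - \<eta>2" _ \<eta>2]) auto
next
  fix \<eta> assume "\<eta> \<in> ssum {\<eta> \<in> Rsp Y. coord_sum \<eta> \<in> S} {\<eta> \<in> Rsp Y. coord_sum \<eta> \<in> T}"
  then obtain \<eta>1 \<eta>2 where "\<eta> = \<eta>1 + \<eta>2" "\<eta>1 \<in> Rsp Y" "\<eta>2 \<in> Rsp Y"
      "coord_sum \<eta>1 \<in> S" "coord_sum \<eta>2 \<in> T"
    by (blast elim: ssumE)
  then show "\<eta> \<in> {\<eta> \<in> Rsp Y. coord_sum \<eta> \<in> ssum S T}"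
    using add_subgroup_add[OF add_subgroup_Rsp[OF Y]] by (auto simp: coord_sum.add intro: ssumI)
qed

context
  fixes X Y :: "ix \<Rightarrow> 'v::ab_group_add set"
  assumes X_subgroup: "\<And>t. add_subgroup (X t)" and Y_subgroup: "\<And>t. add_subgroup (Y t)"
begin

interpretation Phi: subgroup_representation "X10 Y" "\<lambda>i. H'sp Y i \<inter> X10 Y" "\<lambda>i. G'sp X Y i \<inter> X10 Y"
  using X_subgroup Y_subgroup by (rule subgroup_representation_Phi)

lemma nu1_le_X10: "nu1 X Y a \<subseteq> X10 Y"
  unfolding nu1_def by (rule Phi.eval_le_T)

lemma psi_eq: "psi X Y i a = {\<eta> \<in> Rsp Y. coord_sum \<eta> \<in> (\<lambda>\<zeta>. \<zeta> i) ` nu1 X Y a}"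
  unfolding psi_def using Y_subgroup by (rule ssum_X10_Gsp_eq) (use nu1_le_X10 X10_def in blast)

lemma psi_Join: "psi X Y i (Join a b) = ssum (psi X Y i a) (psi X Y i b)"
proof -
  have "(\<lambda>\<zeta>. \<zeta> i) ` nu1 X Y b \<subseteq> Y i"
    using nu1_le_X10 by (force simp: X10_def Rsp_def)
  then show ?thesis
    unfolding psi_eq nu1_Join additive.image_ssum[OF additive_proj]
    by (rule Rsp_coord_sum_vimage_ssum[OF Y_subgroup])
qed

lemma proj_nu1_Int:
  assumes "leD (Xg i) a"
  shows "(\<lambda>\<zeta>. \<zeta> i) ` (nu1 X Y a \<inter> nu1 X Y b) = (\<lambda>\<zeta>. \<zeta> i) ` nu1 X Y a \<inter> (\<lambda>\<zeta>. \<zeta> i) ` nu1 X Y b"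
proof (rule additive.image_Int_eq[OF additive_proj])
  show "add_subgroup (X10 Y)"
    using Y_subgroup by (rule add_subgroup_X10)
  show "add_subgroup (nu1 X Y a)"
    unfolding nu1_def by (rule Phi.add_subgroup_eval)
  show "nu1 X Y a \<subseteq> X10 Y" "nu1 X Y b \<subseteq> X10 Y"
    by (rule nu1_le_X10)+
  show "{\<zeta> \<in> X10 Y. \<zeta> i = 0} \<subseteq> nu1 X Y a"
    using Phi.eval_mono[OF assms] by (auto simp: nu1_def X10_def H'sp_def)
qed

lemma psi_Meet:
  assumes "leD (Xg i) a \<or> leD (Xg i) b"
  shows "psi X Y i (Meet a b) = psi X Y i a \<inter> psi X Y i b"
proof -
  have "(\<lambda>\<zeta>. \<zeta> i) ` (nu1 X Y a \<inter> nu1 X Y b) = (\<lambda>\<zeta>. \<zeta> i) ` nu1 X Y a \<inter> (\<lambda>\<zeta>. \<zeta> i) ` nu1 X Y b"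
    using assms proj_nu1_Int[of i a b] proj_nu1_Int[of i b a] by (metis Int_commute)
  then show ?thesis
    unfolding psi_eq nu1_Meet by blast
qed

lemma psi_Join_Xg: "psi X Y i (Join b (Xg i)) = psi X Y i b"
proof -
  have "(\<lambda>\<zeta>. \<zeta> i) ` ssum (nu1 X Y b) (H'sp Y i \<inter> X10 Y) = (\<lambda>\<zeta>. \<zeta> i) ` nu1 X Y b"
    using add_subgroup_0[OF add_subgroup_Int[OF add_subgroup_H'sp add_subgroup_X10]] Y_subgroup
    by (intro additive.image_ssum_kernel[OF additive_proj]) (auto simp: H'sp_def)
  then show ?thesis
    unfolding psi_eq nu1_Join nu1_Xg by simp
qed

end

lemma leD_Xg_a_el: "leD (Xg i) (a_el i j n)"
  by (cases n) (auto intro: leD_top leD_join1)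

lemma leD_Xg_a_el_snd: "leD (Xg j) (a_el i j n)"
proof (cases n)
  case (Suc m)
  have "leD (Xg j) (Meet (Yg j) (a_el j (third i j) m))"
    by (rule leD_meet_glb[OF leD_gen leD_Xg_a_el])
  then show ?thesis
    unfolding Suc by (auto intro: leD_trans leD_join2)
qed (simp add: leD_top)

lemma leD_Xg_A_el: "leD (Xg i) (A_el i j n)"
  by (cases n) (auto intro: leD_top leD_trans[OF leD_gen leD_join1])

theorem mainTheorem6:
  fixes scale :: "'k::field \<Rightarrow> 'v::ab_group_add \<Rightarrow> 'v"
    and X0 :: "'v set" and X Y :: "ix \<Rightarrow> 'v set" and i j k :: ix
  assumes vs: "vector_space scale"
    and X0_sub: "module.subspace scale X0"
    and X0_fin: "\<exists>B. finite B \<and> B \<subseteq> X0 \<and> module.span scale B = X0"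
    and gens: "\<forall>t. module.subspace scale (X t) \<and> module.subspace scale (Y t)
                  \<and> X t \<subseteq> Y t \<and> Y t \<subseteq> X0"
    and ijk: "i \<noteq> j" "j \<noteq> k" "i \<noteq> k"
  shows "(\<forall>a b.
            (leD (Join (Xg i) (Meet (Xg j) (Xg k))) a
             \<or> leD (Join (Xg i) (Meet (Xg j) (Xg k))) b
             \<or> (leD (Xg i) a \<and> leD (Meet (Xg j) (Xg k)) b)
             \<or> (leD (Xg i) b \<and> leD (Meet (Xg j) (Xg k)) a))
          \<longrightarrow> psi X Y i (Meet a b) = psi X Y i a \<inter> psi X Y i b
            \<and> psi X Y i (Join a b) = ssum (psi X Y i a) (psi X Y i b))
       \<and> (\<forall>n b.
            psi X Y i (Meet b (a_el i j n)) = psi X Y i b \<inter> psi X Y i (a_el i j n)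
          \<and> psi X Y j (Meet b (a_el i j n)) = psi X Y j b \<inter> psi X Y j (a_el i j n)
          \<and> psi X Y i (Meet b (A_el i j n)) = psi X Y i b \<inter> psi X Y i (A_el i j n))
       \<and> (\<forall>b. psi X Y i (Join b (Xg i)) = psi X Y i b)"
proof -
  interpret vector_space scale by (rule vs)
  have "add_subgroup S" if "subspace S" for S
    using that by (simp add: add_subgroup_def subspace_0 subspace_diff)
  then have X: "\<And>t. add_subgroup (X t)" and Y: "\<And>t. add_subgroup (Y t)"
    using gens by auto
  show ?thesis
  proof (intro conjI allI impI)
    fix a b
    assume "leD (Join (Xg i) (Meet (Xg j) (Xg k))) a
             \<or> leD (Join (Xg i) (Meet (Xg j) (Xg k))) b
             \<or> (leD (Xg i) a \<and> leD (Meet (Xg j) (Xg k)) b)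
             \<or> (leD (Xg i) b \<and> leD (Meet (Xg j) (Xg k)) a)"
    then have "leD (Xg i) a \<or> leD (Xg i) b"
      using leD_trans[OF leD_join1] by blast
    then show "psi X Y i (Meet a b) = psi X Y i a \<inter> psi X Y i b"
      by (rule psi_Meet[OF X Y])
    show "psi X Y i (Join a b) = ssum (psi X Y i a) (psi X Y i b)"
      by (rule psi_Join[OF X Y])
  qed (simp_all add: psi_Meet[OF X Y] psi_Join_Xg[OF X Y] leD_Xg_a_el leD_Xg_a_el_snd leD_Xg_A_el)
qed

end
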